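(* Let $\alpha>0$ and consider the nonlinear program described in the context, and let $X$ be an open set containing $\mathcal{C}$ on which $\mathcal{G}_\alpha$ is well defined. Let $x\in X$ with $\Lambda_\alpha(x)\ne\emptyset$. Then for every $(u,v)\in\Lambda_\alpha(x)$, $\nabla f(x)^\top\mathcal{G}_\alpha(x)=-\|\mathcal{G}_\alpha(x)\|^2+\alpha u^\top g(x)+\alpha v^\top h(x)$. Moreover, if $x\in\mathcal{C}$ and MFCQ holds at $x$, then $\nabla f(x)^\top\mathcal{G}_\alpha(x)\le0$, with equality if and only if $x\in X_{KKT}$.
   Context: Let $f:\mathbb{R}^n\to\mathbb{R}$, $g:\mathbb{R}^n\to\mathbb{R}^m$, $h:\mathbb{R}^n\to\mathbb{R}^k$ be continuously differentiable; program: minimize $f(x)$ subject to $g(x)\le0$, $h(x)=0$; feasible set $\mathcal{C}$; $I_0(x)=\{i:g_i(x)=0\}$. MFCQ at $x$: $\{\nabla h_j(x)\}_{j=1}^k$ linearly independent and some $\xi$ has $\nabla h_j(x)^\top\xi=0$ for all $j$ and $\nabla g_i(x)^\top\xi<0$ for $i\in I_0(x)$. $X_{KKT}$ is the set of $x^*$ admitting $u^*\in\mathbb{R}^m,v^*\in\mathbb{R}^k$ with $\nabla f(x^* )+\frac{\partial g}{\partial x}(x^* )^\top u^*+\frac{\partial h}{\partial x}(x^* )^\top v^*=0$, $g(x^* )\le0$, $h(x^* )=0$, $u^*\ge0$, $(u^* )^\top g(x^* )=0$. With $G=\frac{\partial g}{\partial x}(x)$, $H=\frac{\partial h}{\partial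 x}(x)$: $\mathcal{G}_\alpha(x)$ is the unique minimizer over $\xi$ of $\frac12\|\xi+\nabla f(x)\|^2$ subject to $G\xi\le-\alpha g(x)$, $H\xi=-\alpha h(x)$; $\Lambda_\alpha(x)$ is the set of $(u,v)\in\mathbb{R}^m_{\ge0}\times\mathbb{R}^k$ for which some $\xi$ satisfies $\xi+\nabla f(x)+G^\top u+H^\top v=0$, $G\xi+\alpha g(x)\le0$, $H\xi+\alpha h(x)=0$, $u\ge0$, $u^\top(G\xi+\alpha g(x))=0$. The quantity $\nabla f(x)^\top\mathcal{G}_\alpha(x)$ is the (upper-right Dini) derivative of $f$ along the safe gradient flow $\dot x=\mathcal{G}_\alpha(x)$. *)

theory Defs
  imports "HOL-Analysis.Analysis"
begin

text \<open>Data: gradient Df of f, Jacobians Jg (m x n) and Jh (k x n), as functions of x.\<close>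

definition feasible_set ::
  "(real^'n \<Rightarrow> real^'m) \<Rightarrow> (real^'n \<Rightarrow> real^'k) \<Rightarrow> (real^'n) set" where
  "feasible_set g h = {x. (\<forall>i. g x $ i \<le> 0) \<and> h x = 0}"

definition MFCQ ::
  "(real^'n \<Rightarrow> real^'m) \<Rightarrow> (real^'n \<Rightarrow> real^'n^'m) \<Rightarrow> (real^'n \<Rightarrow> real^'n^'k)
   \<Rightarrow> real^'n \<Rightarrow> bool" where
  "MFCQ g Jg Jh x \<longleftrightarrow>
     (\<forall>c :: 'k \<Rightarrow> real. (\<Sum>j\<in>UNIV. c j *\<^sub>R row j (Jh x)) = 0 \<longrightarrow> (\<forall>j. c j = 0)) \<and>
     (\<exists>\<xi>. (\<forall>j. row j (Jh x) \<bullet> \<xi> = 0) \<and>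
          (\<forall>i. g x $ i = 0 \<longrightarrow> row i (Jg x) \<bullet> \<xi> < 0))"

definition KKT_set ::
  "(real^'n \<Rightarrow> real^'n) \<Rightarrow> (real^'n \<Rightarrow> real^'m) \<Rightarrow> (real^'n \<Rightarrow> real^'k)
   \<Rightarrow> (real^'n \<Rightarrow> real^'n^'m) \<Rightarrow> (real^'n \<Rightarrow> real^'n^'k) \<Rightarrow> (real^'n) set" where
  "KKT_set Df g h Jg Jh = {x. \<exists>(u::real^'m) (v::real^'k).
      Df x + transpose (Jg x) *v u + transpose (Jh x) *v v = 0 \<and>
      (\<forall>i. g x $ i \<le> 0) \<and> h x = 0 \<and> (\<forall>i. u $ i \<ge> 0) \<and> u \<bullet> g x = 0}"

definition qp_feasible ::
  "real \<Rightarrow> (real^'n \<Rightarrow> real^'m) \<Rightarrow> (real^'n \<Rightarrow> real^'k)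
   \<Rightarrow> (real^'n \<Rightarrow> real^'n^'m) \<Rightarrow> (real^'n \<Rightarrow> real^'n^'k) \<Rightarrow> real^'n \<Rightarrow> (real^'n) set" where
  "qp_feasible \<alpha> g h Jg Jh x =
     {\<xi>. (\<forall>i. (Jg x *v \<xi>) $ i \<le> - \<alpha> * g x $ i) \<and> Jh x *v \<xi> = - (\<alpha> *\<^sub>R h x)}"

definition qp_minimizer ::
  "real \<Rightarrow> (real^'n \<Rightarrow> real^'n) \<Rightarrow> (real^'n \<Rightarrow> real^'m) \<Rightarrow> (real^'n \<Rightarrow> real^'k)
   \<Rightarrow> (real^'n \<Rightarrow> real^'n^'m) \<Rightarrow> (real^'n \<Rightarrow> real^'n^'k) \<Rightarrow> real^'n \<Rightarrow> real^'n \<Rightarrow> bool" where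
  "qp_minimizer \<alpha> Df g h Jg Jh x \<xi> \<longleftrightarrow>
     \<xi> \<in> qp_feasible \<alpha> g h Jg Jh x \<and>
     (\<forall>\<eta>\<in>qp_feasible \<alpha> g h Jg Jh x.
        (1/2) * (norm (\<xi> + Df x))\<^sup>2 \<le> (1/2) * (norm (\<eta> + Df x))\<^sup>2)"

text \<open>The safe gradient flow vector field: the unique minimizer (when it exists).\<close>
definition safe_grad ::
  "real \<Rightarrow> (real^'n \<Rightarrow> real^'n) \<Rightarrow> (real^'n \<Rightarrow> real^'m) \<Rightarrow> (real^'n \<Rightarrow> real^'k)
   \<Rightarrow> (real^'n \<Rightarrow> real^'n^'m) \<Rightarrow> (real^'n \<Rightarrow> real^'n^'k) \<Rightarrow> real^'n \<Rightarrow> real^'n" where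
  "safe_grad \<alpha> Df g h Jg Jh x = (THE \<xi>. qp_minimizer \<alpha> Df g h Jg Jh x \<xi>)"

definition Lambda_set ::
  "real \<Rightarrow> (real^'n \<Rightarrow> real^'n) \<Rightarrow> (real^'n \<Rightarrow> real^'m) \<Rightarrow> (real^'n \<Rightarrow> real^'k)
   \<Rightarrow> (real^'n \<Rightarrow> real^'n^'m) \<Rightarrow> (real^'n \<Rightarrow> real^'n^'k) \<Rightarrow> real^'n \<Rightarrow> ((real^'m) \<times> (real^'k)) set" where
  "Lambda_set \<alpha> Df g h Jg Jh x = {(u, v). (\<forall>i. u $ i \<ge> 0) \<and> (\<exists>\<xi>.
      \<xi> + Df x + transpose (Jg x) *v u + transpose (Jh x) *v v = 0 \<and>
      (\<forall>i. (Jg x *v \<xi>) $ i + \<alpha> * g x $ i \<le> 0) \<and>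
      Jh x *v \<xi> + \<alpha> *\<^sub>R h x = 0 \<and>
      u \<bullet> (Jg x *v \<xi> + \<alpha> *\<^sub>R g x) = 0)}"

end

theory Submission
  imports Defs
begin

text \<open>
  The quadratic program defining \<open>\<G>\<^sub>\<alpha>(x)\<close> is convex, so any multiplier
  \<open>(u, v) \<in> \<Lambda>\<^sub>\<alpha>(x)\<close> certifies its primal partner \<open>\<xi>\<close> as the minimizer, i.e.
  \<open>\<xi> = \<G>\<^sub>\<alpha>(x)\<close>. Pairing the stationarity equation with \<open>\<xi>\<close> and using
  complementary slackness yields the formula for \<open>\<nabla>f(x)\<^sup>T\<G>\<^sub>\<alpha>(x)\<close>. On the
  feasible set \<open>h(x) = 0\<close> and \<open>u\<^sup>Tg(x) \<le> 0\<close>, so the derivative is \<open>\<le> 0\<close>, and it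
  vanishes iff \<open>\<G>\<^sub>\<alpha>(x) = 0\<close>, i.e. iff \<open>\<xi> = 0\<close> solves the KKT system of the
  quadratic program, which for \<open>\<alpha> > 0\<close> is exactly the KKT system of the original
  program.
\<close>

lemma norm_le_norm_add_if_inner_nonneg:
  fixes a d :: "'a::real_inner"
  assumes "0 \<le> a \<bullet> d"
  shows "norm a \<le> norm (a + d)"
proof -
  have "(norm a)\<^sup>2 \<le> (norm a)\<^sup>2 + 2 * (a \<bullet> d) + (norm d)\<^sup>2"
    using assms by simp
  also have "\<dots> = (norm (a + d))\<^sup>2"
    by (simp add: power2_norm_eq_inner inner_add inner_commute)
  finally show ?thesis
    by (rule power2_le_imp_le) simp
qed

lemma inner_nonpos_if_nonneg_nonpos:
  fixes u w :: "real^'m"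
  assumes "\<forall>i. 0 \<le> u $ i" and "\<forall>i. w $ i \<le> 0"
  shows "u \<bullet> w \<le> 0"
  unfolding inner_vec_def
  by (rule sum_nonpos) (simp add: assms mult_nonneg_nonpos)

definition qp_kkt ::
  "real \<Rightarrow> (real^'n \<Rightarrow> real^'n) \<Rightarrow> (real^'n \<Rightarrow> real^'m) \<Rightarrow> (real^'n \<Rightarrow> real^'k)
   \<Rightarrow> (real^'n \<Rightarrow> real^'n^'m) \<Rightarrow> (real^'n \<Rightarrow> real^'n^'k)
   \<Rightarrow> real^'n \<Rightarrow> real^'m \<Rightarrow> real^'k \<Rightarrow> real^'n \<Rightarrow> bool" where
  "qp_kkt \<alpha> Df g h Jg Jh x u v \<xi> \<longleftrightarrow>
     (\<forall>i. 0 \<le> u $ i) \<and>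
     \<xi> + Df x + transpose (Jg x) *v u + transpose (Jh x) *v v = 0 \<and>
     (\<forall>i. (Jg x *v \<xi>) $ i + \<alpha> * g x $ i \<le> 0) \<and>
     Jh x *v \<xi> + \<alpha> *\<^sub>R h x = 0 \<and>
     u \<bullet> (Jg x *v \<xi> + \<alpha> *\<^sub>R g x) = 0"

lemma mem_Lambda_set_iff:
  "(u, v) \<in> Lambda_set \<alpha> Df g h Jg Jh x \<longleftrightarrow> (\<exists>\<xi>. qp_kkt \<alpha> Df g h Jg Jh x u v \<xi>)"
  unfolding Lambda_set_def qp_kkt_def by auto

lemma qp_kkt_inner_residual:
  assumes "qp_kkt \<alpha> Df g h Jg Jh x u v \<xi>"
  shows "(\<xi> + Df x) \<bullet> w = - (u \<bullet> (Jg x *v w)) - v \<bullet> (Jh x *v w)"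
proof -
  have "\<xi> + Df x + transpose (Jg x) *v u + transpose (Jh x) *v v = 0"
    using assms by (simp add: qp_kkt_def)
  then have stationary: "\<xi> + Df x = - (transpose (Jg x) *v u) - transpose (Jh x) *v v"
    by (simp add: algebra_simps eq_neg_iff_add_eq_0)
  show ?thesis
    unfolding stationary by (simp add: inner_diff_left dot_lmul_matrix)
qed

lemma qp_kkt_imp_qp_minimizer:
  assumes kkt: "qp_kkt \<alpha> Df g h Jg Jh x u v \<xi>"
  shows "qp_minimizer \<alpha> Df g h Jg Jh x \<xi>"
  unfolding qp_minimizer_def
proof (intro conjI ballI)
  from kkt have u_nonneg: "\<forall>i. 0 \<le> u $ i"
    and ineq: "\<forall>i. (Jg x *v \<xi>) $ i + \<alpha> * g x $ i \<le> 0"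
    and eq: "Jh x *v \<xi> = - (\<alpha> *\<^sub>R h x)"
    and slack: "u \<bullet> (Jg x *v \<xi> + \<alpha> *\<^sub>R g x) = 0"
    unfolding qp_kkt_def by (auto simp: eq_neg_iff_add_eq_0)
  have "\<forall>i. (Jg x *v \<xi>) $ i \<le> - \<alpha> * g x $ i"
  proof
    fix i show "(Jg x *v \<xi>) $ i \<le> - \<alpha> * g x $ i"
      using ineq[rule_format, of i] by linarith
  qed
  with eq show "\<xi> \<in> qp_feasible \<alpha> g h Jg Jh x"
    unfolding qp_feasible_def by blast
  fix \<eta> assume "\<eta> \<in> qp_feasible \<alpha> g h Jg Jh x"
  then have \<eta>_le: "\<forall>i. (Jg x *v \<eta>) $ i \<le> - \<alpha> * g x $ i"
    and \<eta>_eq: "Jh x *v \<eta> = - (\<alpha> *\<^sub>R h x)"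
    unfolding qp_feasible_def by auto
  have \<eta>_ineq: "\<forall>i. (Jg x *v \<eta> + \<alpha> *\<^sub>R g x) $ i \<le> 0"
  proof
    fix i show "(Jg x *v \<eta> + \<alpha> *\<^sub>R g x) $ i \<le> 0"
      using \<eta>_le[rule_format, of i] by simp
  qed
  \<comment> \<open>First-order optimality: \<open>\<xi> + \<nabla>f(x)\<close> makes a nonobtuse angle with every feasible direction.\<close>
  have "(\<xi> + Df x) \<bullet> (\<eta> - \<xi>) = - (u \<bullet> (Jg x *v (\<eta> - \<xi>))) - v \<bullet> (Jh x *v (\<eta> - \<xi>))"
    using kkt by (rule qp_kkt_inner_residual)
  also have "u \<bullet> (Jg x *v (\<eta> - \<xi>)) = u \<bullet> (Jg x *v \<eta> + \<alpha> *\<^sub>R g x)"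
    using slack by (simp add: matrix_vector_mult_diff_distrib inner_diff_right inner_add_right)
  also have "Jh x *v (\<eta> - \<xi>) = 0"
    using \<eta>_eq eq by (simp add: matrix_vector_mult_diff_distrib)
  finally have "(\<xi> + Df x) \<bullet> (\<eta> - \<xi>) = - (u \<bullet> (Jg x *v \<eta> + \<alpha> *\<^sub>R g x))"
    by simp
  moreover have "u \<bullet> (Jg x *v \<eta> + \<alpha> *\<^sub>R g x) \<le> 0"
    using u_nonneg \<eta>_ineq by (rule inner_nonpos_if_nonneg_nonpos)
  ultimately have "norm (\<xi> + Df x) \<le> norm ((\<xi> + Df x) + (\<eta> - \<xi>))"
    by (intro norm_le_norm_add_if_inner_nonneg) simp
  also have "(\<xi> + Df x) + (\<eta> - \<xi>) = \<eta> + Df x"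
    by simp
  finally show "(1/2) * (norm (\<xi> + Df x))\<^sup>2 \<le> (1/2) * (norm (\<eta> + Df x))\<^sup>2"
    by (simp add: power_mono)
qed

lemma qp_kkt_inner_Df:
  assumes "qp_kkt \<alpha> Df g h Jg Jh x u v \<xi>"
  shows "Df x \<bullet> \<xi> = - (norm \<xi>)\<^sup>2 + \<alpha> * (u \<bullet> g x) + \<alpha> * (v \<bullet> h x)"
proof -
  have "Df x \<bullet> \<xi> = (\<xi> + Df x) \<bullet> \<xi> - \<xi> \<bullet> \<xi>"
    by (simp add: inner_add_left)
  also have "\<dots> = - (u \<bullet> (Jg x *v \<xi>)) - v \<bullet> (Jh x *v \<xi>) - (norm \<xi>)\<^sup>2"
    using assms by (simp add: qp_kkt_inner_residual power2_norm_eq_inner)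
  also have "u \<bullet> (Jg x *v \<xi>) = - \<alpha> * (u \<bullet> g x)"
    using assms by (simp add: qp_kkt_def inner_add_right)
  also have "Jh x *v \<xi> = - (\<alpha> *\<^sub>R h x)"
    using assms by (simp add: qp_kkt_def eq_neg_iff_add_eq_0)
  finally show ?thesis
    by simp
qed

lemma KKT_set_iff_qp_kkt_zero:
  assumes "0 < \<alpha>"
  shows "x \<in> KKT_set Df g h Jg Jh \<longleftrightarrow> (\<exists>u v. qp_kkt \<alpha> Df g h Jg Jh x u v 0)"
proof
  assume "x \<in> KKT_set Df g h Jg Jh"
  then obtain u v where "Df x + transpose (Jg x) *v u + transpose (Jh x) *v v = 0"
    and "\<forall>i. g x $ i \<le> 0" "h x = 0" "\<forall>i. 0 \<le> u $ i" "u \<bullet> g x = 0"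
    unfolding KKT_set_def by auto
  then have "qp_kkt \<alpha> Df g h Jg Jh x u v 0"
    using assms by (simp add: qp_kkt_def mult_nonneg_nonpos)
  then show "\<exists>u v. qp_kkt \<alpha> Df g h Jg Jh x u v 0"
    by blast
next
  assume "\<exists>u v. qp_kkt \<alpha> Df g h Jg Jh x u v 0"
  then show "x \<in> KKT_set Df g h Jg Jh"
    using assms unfolding qp_kkt_def KKT_set_def
    by (auto simp: mult_le_0_iff)
qed

lemma safe_grad_eqI:
  assumes "\<exists>!\<xi>. qp_minimizer \<alpha> Df g h Jg Jh x \<xi>" and "qp_minimizer \<alpha> Df g h Jg Jh x \<xi>"
  shows "safe_grad \<alpha> Df g h Jg Jh x = \<xi>"
  unfolding safe_grad_def using assms by (rule the1_equality)

lemma qp_kkt_safe_grad: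
  assumes "\<exists>!\<xi>. qp_minimizer \<alpha> Df g h Jg Jh x \<xi>"
    and "(u, v) \<in> Lambda_set \<alpha> Df g h Jg Jh x"
  shows "qp_kkt \<alpha> Df g h Jg Jh x u v (safe_grad \<alpha> Df g h Jg Jh x)"
proof -
  from assms(2) obtain \<xi> where kkt: "qp_kkt \<alpha> Df g h Jg Jh x u v \<xi>"
    by (auto simp: mem_Lambda_set_iff)
  have "safe_grad \<alpha> Df g h Jg Jh x = \<xi>"
    using assms(1) qp_kkt_imp_qp_minimizer[OF kkt] by (rule safe_grad_eqI)
  with kkt show ?thesis
    by simp
qed

lemma inner_Df_safe_grad_eq:
  assumes "\<exists>!\<xi>. qp_minimizer \<alpha> Df g h Jg Jh x \<xi>"
    and "(u, v) \<in> Lambda_set \<alpha> Df g h Jg Jh x"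
  shows "Df x \<bullet> safe_grad \<alpha> Df g h Jg Jh x
    = - (norm (safe_grad \<alpha> Df g h Jg Jh x))\<^sup>2 + \<alpha> * (u \<bullet> g x) + \<alpha> * (v \<bullet> h x)"
  using qp_kkt_safe_grad[OF assms] by (rule qp_kkt_inner_Df)

lemma inner_Df_safe_grad_le:
  assumes unique: "\<exists>!\<xi>. qp_minimizer \<alpha> Df g h Jg Jh x \<xi>"
    and uv: "(u, v) \<in> Lambda_set \<alpha> Df g h Jg Jh x"
    and feasible: "x \<in> feasible_set g h" and "0 \<le> \<alpha>"
  shows "Df x \<bullet> safe_grad \<alpha> Df g h Jg Jh x \<le> - (norm (safe_grad \<alpha> Df g h Jg Jh x))\<^sup>2"
proof -
  from feasible have "\<forall>i. g x $ i \<le> 0" and "h x = 0"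
    unfolding feasible_set_def by auto
  moreover from uv have "\<forall>i. 0 \<le> u $ i"
    by (auto simp: Lambda_set_def)
  ultimately have "\<alpha> * (u \<bullet> g x) \<le> 0"
    using \<open>0 \<le> \<alpha>\<close> by (simp add: mult_nonneg_nonpos inner_nonpos_if_nonneg_nonpos)
  then show ?thesis
    using inner_Df_safe_grad_eq[OF unique uv] \<open>h x = 0\<close> by simp
qed

lemma inner_Df_safe_grad_nonpos:
  assumes "\<exists>!\<xi>. qp_minimizer \<alpha> Df g h Jg Jh x \<xi>"
    and "Lambda_set \<alpha> Df g h Jg Jh x \<noteq> {}"
    and "x \<in> feasible_set g h" and "0 \<le> \<alpha>"
  shows "Df x \<bullet> safe_grad \<alpha> Df g h Jg Jh x \<le> 0"
proof -
  from assms(2) obtain u v where "(u, v) \<in> Lambda_set \<alpha> Df g h Jg Jh x"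
    by auto
  from inner_Df_safe_grad_le[OF assms(1) this assms(3,4)] show ?thesis
    by (smt (verit) zero_le_power2)
qed

lemma inner_Df_safe_grad_eq_0_iff:
  assumes unique: "\<exists>!\<xi>. qp_minimizer \<alpha> Df g h Jg Jh x \<xi>"
    and "Lambda_set \<alpha> Df g h Jg Jh x \<noteq> {}"
    and feasible: "x \<in> feasible_set g h" and "0 < \<alpha>"
  shows "Df x \<bullet> safe_grad \<alpha> Df g h Jg Jh x = 0 \<longleftrightarrow> x \<in> KKT_set Df g h Jg Jh"
proof
  from assms(2) obtain u v where uv: "(u, v) \<in> Lambda_set \<alpha> Df g h Jg Jh x"
    by auto
  assume "Df x \<bullet> safe_grad \<alpha> Df g h Jg Jh x = 0"
  with inner_Df_safe_grad_le[OF unique uv feasible] \<open>0 < \<alpha>\<close>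
  have "safe_grad \<alpha> Df g h Jg Jh x = 0"
    by simp
  then have "qp_kkt \<alpha> Df g h Jg Jh x u v 0"
    using qp_kkt_safe_grad[OF unique uv] by simp
  then show "x \<in> KKT_set Df g h Jg Jh"
    using KKT_set_iff_qp_kkt_zero[OF \<open>0 < \<alpha>\<close>] by blast
next
  assume "x \<in> KKT_set Df g h Jg Jh"
  then obtain u v where "qp_kkt \<alpha> Df g h Jg Jh x u v 0"
    using KKT_set_iff_qp_kkt_zero[OF \<open>0 < \<alpha>\<close>] by blast
  then have "qp_minimizer \<alpha> Df g h Jg Jh x 0"
    by (rule qp_kkt_imp_qp_minimizer)
  with unique have "safe_grad \<alpha> Df g h Jg Jh x = 0"
    by (rule safe_grad_eqI)
  then show "Df x \<bullet> safe_grad \<alpha> Df g h Jg Jh x = 0"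
    by simp
qed

theorem mainTheorem11:
  fixes f :: "real^'n \<Rightarrow> real" and Df :: "real^'n \<Rightarrow> real^'n"
    and g :: "real^'n \<Rightarrow> real^'m" and Jg :: "real^'n \<Rightarrow> real^'n^'m"
    and h :: "real^'n \<Rightarrow> real^'k" and Jh :: "real^'n \<Rightarrow> real^'n^'k"
    and \<alpha> :: real and X :: "(real^'n) set" and x :: "real^'n"
  assumes f_deriv: "\<And>y. (f has_derivative (\<lambda>d. Df y \<bullet> d)) (at y)"
    and f_C1: "continuous_on UNIV Df"
    and g_deriv: "\<And>y. (g has_derivative (\<lambda>d. Jg y *v d)) (at y)"
    and g_C1: "continuous_on UNIV Jg"
    and h_deriv: "\<And>y. (h has_derivative (\<lambda>d. Jh y *v d)) (at y)"
    and h_C1: "continuous_on UNIV Jh"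
    and alpha_pos: "\<alpha> > 0"
    and X_open: "open X"
    and C_sub: "feasible_set g h \<subseteq> X"
    and G_welldef: "\<forall>y\<in>X. \<exists>!\<xi>. qp_minimizer \<alpha> Df g h Jg Jh y \<xi>"
    and x_in: "x \<in> X"
    and Lambda_ne: "Lambda_set \<alpha> Df g h Jg Jh x \<noteq> {}"
  shows "(\<forall>(u, v) \<in> Lambda_set \<alpha> Df g h Jg Jh x.
            Df x \<bullet> safe_grad \<alpha> Df g h Jg Jh x
              = - (norm (safe_grad \<alpha> Df g h Jg Jh x))\<^sup>2 + \<alpha> * (u \<bullet> g x) + \<alpha> * (v \<bullet> h x))
       \<and> (x \<in> feasible_set g h \<and> MFCQ g Jg Jh x \<longrightarrow>
            Df x \<bullet> safe_grad \<alpha> Df g h Jg Jh x \<le> 0 \<and>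
            (Df x \<bullet> safe_grad \<alpha> Df g h Jg Jh x = 0 \<longleftrightarrow> x \<in> KKT_set Df g h Jg Jh))"
proof -
  have unique: "\<exists>!\<xi>. qp_minimizer \<alpha> Df g h Jg Jh x \<xi>"
    using G_welldef x_in by blast
  have "\<forall>(u, v) \<in> Lambda_set \<alpha> Df g h Jg Jh x.
          Df x \<bullet> safe_grad \<alpha> Df g h Jg Jh x
            = - (norm (safe_grad \<alpha> Df g h Jg Jh x))\<^sup>2 + \<alpha> * (u \<bullet> g x) + \<alpha> * (v \<bullet> h x)"
    using inner_Df_safe_grad_eq[OF unique] by blast
  moreover have "Df x \<bullet> safe_grad \<alpha> Df g h Jg Jh x \<le> 0 \<and>
      (Df x \<bullet> safe_grad \<alpha> Df g h Jg Jh x = 0 \<longleftrightarrow> x \<in> KKT_set Df g h Jg Jh)"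
    if "x \<in> feasible_set g h"
    using inner_Df_safe_grad_nonpos[OF unique Lambda_ne that] alpha_pos
      inner_Df_safe_grad_eq_0_iff[OF unique Lambda_ne that alpha_pos] by simp
  ultimately show ?thesis
    by blast
qed

end
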